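(* Let $X$ be a metric space, $f\in\Delta_1(X)$, and $\{x,y\}\in A(f)$. Then for every $z\in C(x,y)$ we have $\{x,z\}\in A(f)$ and $f(z)=f(y)+d(y,z)$.
   Context: $\Delta_1(X)$ is the set of 1-Lipschitz functions $f\colon X\to\mathbb R$ with $f(x)+f(y)\ge d(x,y)$ for all $x,y$. $A(f)$ is the set of unordered pairs $\{x,y\}$ with $f(x)+f(y)=d(x,y)$. $I(x,y)=\{v: d(x,v)+d(v,y)=d(x,y)\}$ and the cone $C(x,v)=\{y\in X: v\in I(x,y)\}$. *)

theory Defs
  imports "HOL-Analysis.Analysis"
begin

definition Delta1 :: "('a::metric_space \<Rightarrow> real) set" where
  "Delta1 = {f. (\<forall>x y. \<bar>f x - f y\<bar> \<le> dist x y) \<and> (\<forall>x y. f x + f y \<ge> dist x y)}"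

definition Apairs :: "('a::metric_space \<Rightarrow> real) \<Rightarrow> 'a set set" where
  "Apairs f = {{x, y} | x y. f x + f y = dist x y}"

definition interval_m :: "'a::metric_space \<Rightarrow> 'a \<Rightarrow> 'a set" where
  "interval_m x y = {v. dist x v + dist v y = dist x y}"

definition cone_m :: "'a::metric_space \<Rightarrow> 'a \<Rightarrow> 'a set" where
  "cone_m x v = {y. v \<in> interval_m x y}"

end

theory Submission
  imports Defs
begin

text \<open>Along the geodesic extension x, y, z the 1-Lipschitz bound gives f z \<le> f y + d(y,z),
  while f x + f z \<ge> d(x,z) = d(x,y) + d(y,z) = f x + f y + d(y,z); hence both are equalities.\<close>

lemma Apairs_iff: "{x, y} \<in> Apairs f \<longleftrightarrow> f x + f y = dist x y"
  unfolding Apairs_def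
  by (auto simp: doubleton_eq_iff dist_commute add.commute)

lemma cone_m_iff: "z \<in> cone_m x y \<longleftrightarrow> dist x y + dist y z = dist x z"
  unfolding cone_m_def interval_m_def by simp

lemma Delta1_lipschitz: "f \<in> Delta1 \<Longrightarrow> \<bar>f a - f b\<bar> \<le> dist a b"
  unfolding Delta1_def by blast

lemma Delta1_sum_ge_dist: "f \<in> Delta1 \<Longrightarrow> dist a b \<le> f a + f b"
  unfolding Delta1_def by blast

theorem lemma5p1:
  fixes f :: "'a::metric_space \<Rightarrow> real" and x y z :: 'a
  assumes "f \<in> Delta1"
    and "{x, y} \<in> Apairs f"
    and "z \<in> cone_m x y"
  shows "{x, z} \<in> Apairs f \<and> f z = f y + dist y z"
proof -
  have xy: "f x + f y = dist x y" using assms(2) by (simp add: Apairs_iff)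
  have xyz: "dist x y + dist y z = dist x z" using assms(3) by (simp add: cone_m_iff)
  have upper: "f z \<le> f y + dist y z"
    using Delta1_lipschitz[OF assms(1), of z y] by (simp add: dist_commute)
  have lower: "dist x z \<le> f x + f z" using Delta1_sum_ge_dist[OF assms(1)] .
  have "f z = f y + dist y z" and "f x + f z = dist x z"
    using xy xyz upper lower by linarith+
  then show ?thesis by (simp add: Apairs_iff)
qed

end
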